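(* Let $X$ be a scattered topological space such that $\mathrm{Homeo}(X)$ is fully transitive, and assume each similarity class of $X$ is infinite. Then $\mathrm{Homeo}(X)$ is topologically perfect.
   Context: A topological space (not assumed Hausdorff) is scattered if every nonempty subset has a point isolated in that subset. For scattered $X$, $\mathrm{Homeo}(X)$ carries the topology of pointwise convergence on $X$. Two points $x,y\in X$ are similar if there are neighbourhoods $U_x\ni x$, $U_y\ni y$ and a homeomorphism $h\colon U_x\to U_y$ with $h(x)=y$; the equivalence classes are similarity classes. $\mathrm{Homeo}(X)$ is fully transitive if for every $k$ and all $k$-tuples of pairwise distinct points $(x_1,\dots,x_k)$, $(y_1,\dots,y_k)$ with $x_i$ similar to $y_i$, some homeomorphism $g$ satisfies $g(x_i)=y_i$ for all $i$. A topological group is topologically perfect if its derived subgroup is dense. *)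

theory Defs
  imports "HOL-Analysis.Analysis" "HOL-Algebra.Generated_Groups"
begin

definition scattered_space :: "'a topology \<Rightarrow> bool" where
  "scattered_space X \<longleftrightarrow>
     (\<forall>S. S \<subseteq> topspace X \<and> S \<noteq> {} \<longrightarrow>
        (\<exists>x\<in>S. \<exists>U. openin X U \<and> U \<inter> S = {x}))"

definition homeo_group :: "'a topology \<Rightarrow> ('a \<Rightarrow> 'a) monoid" where
  "homeo_group X =
     \<lparr>carrier = {f. f \<in> extensional (topspace X) \<and> homeomorphic_map X X f},
      mult = (\<lambda>g f. compose (topspace X) g f),
      one = restrict id (topspace X)\<rparr>"

definition pointwise_topology :: "'a topology \<Rightarrow> ('a \<Rightarrow> 'a) topology" where
  "pointwise_topology X = product_topology (\<lambda>_. X) (topspace X)"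

definition similar_pts :: "'a topology \<Rightarrow> 'a \<Rightarrow> 'a \<Rightarrow> bool" where
  "similar_pts X x y \<longleftrightarrow>
     (\<exists>U V h. openin X U \<and> openin X V \<and> x \<in> U \<and> y \<in> V \<and>
        homeomorphic_map (subtopology X U) (subtopology X V) h \<and> h x = y)"

definition fully_transitive :: "'a topology \<Rightarrow> bool" where
  "fully_transitive X \<longleftrightarrow>
     (\<forall>xs ys. length xs = length ys \<and> distinct xs \<and> distinct ys \<and>
        set xs \<subseteq> topspace X \<and> set ys \<subseteq> topspace X \<and>
        (\<forall>i<length xs. similar_pts X (xs ! i) (ys ! i)) \<longrightarrow>
        (\<exists>g\<in>carrier (homeo_group X). \<forall>i<length xs. g (xs ! i) = ys ! i))"

definition topologically_perfect_homeo :: "'a topology \<Rightarrow> bool" where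
  "topologically_perfect_homeo X \<longleftrightarrow>
     (subtopology (pointwise_topology X) (carrier (homeo_group X))) closure_of
        (derived (homeo_group X) (carrier (homeo_group X)))
     = carrier (homeo_group X)"

end

theory Submission
  imports Defs
begin

text \<open>A basic neighbourhood of a homeomorphism f in the pointwise topology constrains only
finitely many points x_1, ..., x_n, so it suffices to find a commutator that agrees with f
there. As similarity classes are infinite, there are distinct points z_i similar to x_i and
outside {x_j} and {f x_j}. Full transitivity gives homeomorphisms a with a x_i = f x_i,
a z_i = z_i and t with t z_i = x_i; then the commutator a t a^-1 t^-1 maps x_i via z_i, z_i
and x_i to f x_i.\<close>

lemma homeo_group_carrier_iff:
  "f \<in> carrier (homeo_group X) \<longleftrightarrow> f \<in> extensional (topspace X) \<and> homeomorphic_map X X f"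
  by (simp add: homeo_group_def)

lemma homeo_group_mult_apply:
  "x \<in> topspace X \<Longrightarrow> (g \<otimes>\<^bsub>homeo_group X\<^esub> f) x = g (f x)"
  by (simp add: homeo_group_def compose_def)

lemma homeo_group_carrier_imp_image:
  "f \<in> carrier (homeo_group X) \<Longrightarrow> x \<in> topspace X \<Longrightarrow> f x \<in> topspace X"
  by (auto simp: homeo_group_carrier_iff homeomorphic_eq_everything_map)

lemma homeo_group_carrier_imp_inj_on:
  "f \<in> carrier (homeo_group X) \<Longrightarrow> inj_on f (topspace X)"
  by (auto simp: homeo_group_carrier_iff homeomorphic_eq_everything_map)

lemma homeo_group_carrier_subset_pointwise:
  "carrier (homeo_group X) \<subseteq> topspace (pointwise_topology X)"
proof
  fix f assume "f \<in> carrier (homeo_group X)"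
  then show "f \<in> topspace (pointwise_topology X)"
    by (auto simp: pointwise_topology_def topspace_product_topology PiE_iff
        homeo_group_carrier_imp_image homeo_group_carrier_iff[of f])
qed

lemma group_homeo_group: "group (homeo_group X)"
proof (rule groupI)
  fix f g assume "f \<in> carrier (homeo_group X)" "g \<in> carrier (homeo_group X)"
  then have "homeomorphic_map X X (f \<circ> g)"
    by (auto simp: homeo_group_carrier_iff intro: homeomorphic_map_compose)
  then have "homeomorphic_map X X (compose (topspace X) f g)"
    by (rule homeomorphic_map_eq) (simp add: compose_def)
  then show "f \<otimes>\<^bsub>homeo_group X\<^esub> g \<in> carrier (homeo_group X)"
    by (simp add: homeo_group_def)
next
  show "\<one>\<^bsub>homeo_group X\<^esub> \<in> carrier (homeo_group X)"
    by (auto simp: homeo_group_def intro: homeomorphic_map_eq[of X X id])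
next
  fix f g h assume "h \<in> carrier (homeo_group X)"
  then show "f \<otimes>\<^bsub>homeo_group X\<^esub> g \<otimes>\<^bsub>homeo_group X\<^esub> h =
      f \<otimes>\<^bsub>homeo_group X\<^esub> (g \<otimes>\<^bsub>homeo_group X\<^esub> h)"
    using homeo_group_carrier_imp_image[of h X]
    by (auto simp: homeo_group_def compose_def restrict_def fun_eq_iff)
next
  fix f assume f: "f \<in> carrier (homeo_group X)"
  then show "\<one>\<^bsub>homeo_group X\<^esub> \<otimes>\<^bsub>homeo_group X\<^esub> f = f"
    using homeo_group_carrier_imp_image[OF f] homeo_group_carrier_iff[of f X]
    by (auto simp: homeo_group_def compose_def restrict_def fun_eq_iff extensional_def)
next
  fix f assume f: "f \<in> carrier (homeo_group X)"
  then obtain g where g: "homeomorphic_maps X X f g"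
    by (metis homeo_group_carrier_iff homeomorphic_map_maps)
  then have "homeomorphic_map X X g"
    using homeomorphic_maps_map by blast
  then have "homeomorphic_map X X (restrict g (topspace X))"
    by (rule homeomorphic_map_eq) simp
  then have "restrict g (topspace X) \<in> carrier (homeo_group X)"
    by (simp add: homeo_group_carrier_iff)
  moreover have "restrict g (topspace X) \<otimes>\<^bsub>homeo_group X\<^esub> f = \<one>\<^bsub>homeo_group X\<^esub>"
    using g homeo_group_carrier_imp_image[OF f]
    by (auto simp: homeo_group_def compose_def restrict_def fun_eq_iff homeomorphic_maps_def)
  ultimately show "\<exists>g\<in>carrier (homeo_group X). g \<otimes>\<^bsub>homeo_group X\<^esub> f = \<one>\<^bsub>homeo_group X\<^esub>"
    by blast
qed

lemma homeo_group_inv_apply: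
  assumes "f \<in> carrier (homeo_group X)" "x \<in> topspace X"
  shows "(inv\<^bsub>homeo_group X\<^esub> f) (f x) = x"
proof -
  interpret group "homeo_group X" by (rule group_homeo_group)
  have "(inv\<^bsub>homeo_group X\<^esub> f \<otimes>\<^bsub>homeo_group X\<^esub> f) x = \<one>\<^bsub>homeo_group X\<^esub> x"
    using assms(1) by simp
  then show ?thesis
    using assms(2) by (simp add: homeo_group_mult_apply) (simp add: homeo_group_def)
qed

lemma homeo_commutator_apply:
  assumes a: "a \<in> carrier (homeo_group X)" and t: "t \<in> carrier (homeo_group X)"
    and z: "z \<in> topspace X" and tz: "t z = x" and az: "a z = z"
  shows "(a \<otimes>\<^bsub>homeo_group X\<^esub> t \<otimes>\<^bsub>homeo_group X\<^esub> inv\<^bsub>homeo_group X\<^esub> a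
      \<otimes>\<^bsub>homeo_group X\<^esub> inv\<^bsub>homeo_group X\<^esub> t) x = a x"
proof -
  have x: "x \<in> topspace X"
    using homeo_group_carrier_imp_image[OF t z] tz by simp
  have "(inv\<^bsub>homeo_group X\<^esub> t) x = z"
    using homeo_group_inv_apply[OF t z] tz by simp
  moreover have "(inv\<^bsub>homeo_group X\<^esub> a) z = z"
    using homeo_group_inv_apply[OF a z] az by simp
  ultimately show ?thesis
    using x z tz by (simp add: homeo_group_mult_apply)
qed

lemma similar_pts_refl: "x \<in> topspace X \<Longrightarrow> similar_pts X x x"
  unfolding similar_pts_def by (intro exI[of _ "topspace X"] exI[of _ id]) auto

lemma similar_pts_homeomorphic_map:
  "homeomorphic_map X X f \<Longrightarrow> x \<in> topspace X \<Longrightarrow> similar_pts X x (f x)"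
  unfolding similar_pts_def
  by (intro exI[of _ "topspace X"] exI[of _ f]) (auto simp: homeomorphic_eq_everything_map)

lemma similar_pts_sym:
  assumes "similar_pts X x y"
  shows "similar_pts X y x"
proof -
  obtain U V h where UV: "openin X U" "openin X V" "x \<in> U" "y \<in> V"
    and h: "homeomorphic_map (subtopology X U) (subtopology X V) h" "h x = y"
    using assms unfolding similar_pts_def by blast
  obtain g where g: "homeomorphic_maps (subtopology X U) (subtopology X V) h g"
    using h homeomorphic_map_maps by blast
  have "x \<in> topspace (subtopology X U)"
    using UV openin_subset by fastforce
  then have "g y = x"
    using g h(2) by (auto simp: homeomorphic_maps_def)
  moreover have "homeomorphic_map (subtopology X V) (subtopology X U) g"
    using g homeomorphic_maps_map by blast
  ultimately show ?thesis
    using UV unfolding similar_pts_def by blast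
qed

lemma fully_transitiveE:
  assumes "fully_transitive X" "list_all2 (similar_pts X) xs ys"
    "distinct xs" "distinct ys" "set xs \<subseteq> topspace X" "set ys \<subseteq> topspace X"
  obtains g where "g \<in> carrier (homeo_group X)" "map g xs = ys"
proof -
  obtain g where "g \<in> carrier (homeo_group X)" "\<forall>i<length xs. g (xs ! i) = ys ! i"
    using assms unfolding fully_transitive_def list_all2_conv_all_nth by blast
  moreover have "length xs = length ys"
    using assms(2) by (rule list_all2_lengthD)
  ultimately show ?thesis
    using that by (simp add: list_eq_iff_nth_eq)
qed

lemma exists_similar_list_avoiding:
  assumes "\<forall>x\<in>topspace X. infinite {y \<in> topspace X. similar_pts X x y}"
    and "finite B" "set xs \<subseteq> topspace X"
  shows "\<exists>zs. list_all2 (similar_pts X) xs zs \<and> distinct zs \<and>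
    set zs \<subseteq> topspace X \<and> set zs \<inter> B = {}"
  using assms(3)
proof (induction xs)
  case Nil
  then show ?case by simp
next
  case (Cons x xs)
  then obtain zs where zs: "list_all2 (similar_pts X) xs zs" "distinct zs"
    "set zs \<subseteq> topspace X" "set zs \<inter> B = {}"
    by auto
  have "infinite ({y \<in> topspace X. similar_pts X x y} - (B \<union> set zs))"
    using Cons.prems assms(1,2) by (simp add: Diff_infinite_finite)
  then obtain z where "z \<in> {y \<in> topspace X. similar_pts X x y} - (B \<union> set zs)"
    using infinite_imp_nonempty by blast
  with zs show ?case
    by (intro exI[of _ "z # zs"]) auto
qed

lemma pointwise_closure_of_eqI:
  assumes H: "H \<subseteq> topspace (pointwise_topology X)" and "S \<subseteq> H"
    and interpolate:
      "\<And>f F. \<lbrakk>f \<in> H; finite F; F \<subseteq> topspace X\<rbrakk> \<Longrightarrow> \<exists>g\<in>S. \<forall>x\<in>F. g x = f x"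
  shows "subtopology (pointwise_topology X) H closure_of S = H"
proof
  show "subtopology (pointwise_topology X) H closure_of S \<subseteq> H"
    using closure_of_subset_topspace H by fastforce
next
  show "H \<subseteq> subtopology (pointwise_topology X) H closure_of S"
  proof
    fix f assume f: "f \<in> H"
    show "f \<in> subtopology (pointwise_topology X) H closure_of S"
      unfolding in_closure_of
    proof (intro conjI allI impI)
      show "f \<in> topspace (subtopology (pointwise_topology X) H)"
        using f H by auto
      fix T assume "f \<in> T \<and> openin (subtopology (pointwise_topology X) H) T"
      then obtain U where U: "openin (pointwise_topology X) U" "T = U \<inter> H" "f \<in> U"
        by (auto simp: openin_subtopology)
      then obtain V where V: "finite {x \<in> topspace X. V x \<noteq> topspace X}"
        "f \<in> Pi\<^sub>E (topspace X) V" "Pi\<^sub>E (topspace X) V \<subseteq> U"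
        unfolding pointwise_topology_def openin_product_topology_alt by blast
      obtain g where g: "g \<in> S" "\<forall>x \<in> {x \<in> topspace X. V x \<noteq> topspace X}. g x = f x"
        using interpolate[OF f V(1)] by auto
      have "g \<in> topspace (pointwise_topology X)"
        using g(1) assms(1,2) by auto
      then have "g \<in> Pi\<^sub>E (topspace X) V"
        using g(2) V(2) by (auto simp: pointwise_topology_def topspace_product_topology PiE_iff)
      then show "\<exists>g. g \<in> S \<and> g \<in> T"
        using g(1) assms(2) U(2) V(3) by blast
    qed
  qed
qed

lemma fully_transitive_homeo_agrees_and_fixes:
  assumes trans: "fully_transitive X" and f: "f \<in> carrier (homeo_group X)"
    and xs: "distinct xs" "set xs \<subseteq> topspace X"
    and zs: "distinct zs" "set zs \<subseteq> topspace X" "set zs \<inter> (set xs \<union> f ` set xs) = {}"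
  obtains a where "a \<in> carrier (homeo_group X)"
    "\<forall>x\<in>set xs. a x = f x" "\<forall>z\<in>set zs. a z = z"
proof -
  have f_xs: "distinct (map f xs)" "set (map f xs) \<subseteq> topspace X"
    using xs homeo_group_carrier_imp_inj_on[OF f] homeo_group_carrier_imp_image[OF f]
    by (auto simp: distinct_map inj_on_subset)
  have "list_all2 (similar_pts X) xs (map f xs)"
    unfolding list_all2_map2 using f xs
    by (intro list.rel_refl_strong) (auto simp: homeo_group_carrier_iff similar_pts_homeomorphic_map)
  moreover have "list_all2 (similar_pts X) zs zs"
    using zs by (intro list.rel_refl_strong similar_pts_refl) auto
  ultimately have "list_all2 (similar_pts X) (xs @ zs) (map f xs @ zs)"
    by (rule list_all2_appendI)
  moreover have "distinct (xs @ zs)" "distinct (map f xs @ zs)"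
    using xs zs f_xs by auto
  moreover have "set (xs @ zs) \<subseteq> topspace X" "set (map f xs @ zs) \<subseteq> topspace X"
    using xs zs f_xs by auto
  ultimately obtain a where a: "a \<in> carrier (homeo_group X)" "map a (xs @ zs) = map f xs @ zs"
    by (rule fully_transitiveE[OF trans])
  then have "map a xs = map f xs" "map a zs = map id zs"
    by simp_all
  then show ?thesis
    using that a(1) unfolding map_eq_conv by simp
qed

lemma derived_homeo_group_interpolates:
  assumes trans: "fully_transitive X"
    and infinite_classes: "\<forall>x\<in>topspace X. infinite {y \<in> topspace X. similar_pts X x y}"
    and f: "f \<in> carrier (homeo_group X)" and F: "finite F" "F \<subseteq> topspace X"
  shows "\<exists>g\<in>derived (homeo_group X) (carrier (homeo_group X)). \<forall>x\<in>F. g x = f x"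
proof -
  let ?G = "homeo_group X"
  obtain xs where xs: "set xs = F" "distinct xs"
    using F(1) finite_distinct_list by blast
  obtain zs where zs: "list_all2 (similar_pts X) xs zs" "distinct zs" "set zs \<subseteq> topspace X"
    "set zs \<inter> (F \<union> f ` F) = {}"
    using exists_similar_list_avoiding[OF infinite_classes, of "F \<union> f ` F" xs] F xs by auto
  obtain a where a: "a \<in> carrier ?G" "\<forall>x\<in>F. a x = f x" "\<forall>z\<in>set zs. a z = z"
    using fully_transitive_homeo_agrees_and_fixes[OF trans f xs(2) _ zs(2,3)] xs(1) zs(4) F(2)
    by blast
  have "list_all2 (similar_pts X) zs xs"
    using zs(1) by (metis list.rel_flip list_all2_mono conversep_iff similar_pts_sym)
  moreover have "set xs \<subseteq> topspace X"
    using xs(1) F(2) by simp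
  ultimately obtain t where t: "t \<in> carrier ?G" "map t zs = xs"
    using fully_transitiveE[OF trans _ zs(2) xs(2) zs(3)] by blast
  let ?c = "a \<otimes>\<^bsub>?G\<^esub> t \<otimes>\<^bsub>?G\<^esub> inv\<^bsub>?G\<^esub> a \<otimes>\<^bsub>?G\<^esub> inv\<^bsub>?G\<^esub> t"
  have "?c \<in> derived_set ?G (carrier ?G)"
    using a(1) t(1) by blast
  then have "?c \<in> derived ?G (carrier ?G)"
    unfolding derived_def by (rule generate.incl)
  moreover have "?c x = f x" if "x \<in> F" for x
  proof -
    have "x \<in> t ` set zs"
      using that xs(1) t(2) by (metis list.set_map)
    then obtain z where "z \<in> set zs" "t z = x"
      by blast
    then show ?thesis
      using homeo_commutator_apply[OF a(1) t(1)] a(2,3) zs(3) that by auto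
  qed
  ultimately show ?thesis by blast
qed

theorem proposition17:
  fixes X :: "'a topology"
  assumes "scattered_space X"
    and "fully_transitive X"
    and "\<forall>x\<in>topspace X. infinite {y \<in> topspace X. similar_pts X x y}"
  shows "topologically_perfect_homeo X"
  unfolding topologically_perfect_homeo_def
proof (rule pointwise_closure_of_eqI)
  show "carrier (homeo_group X) \<subseteq> topspace (pointwise_topology X)"
    by (rule homeo_group_carrier_subset_pointwise)
  show "derived (homeo_group X) (carrier (homeo_group X)) \<subseteq> carrier (homeo_group X)"
    by (rule group.derived_in_carrier[OF group_homeo_group]) simp
qed (use derived_homeo_group_interpolates[OF assms(2,3)] in blast)

end
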